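(* Let $X$ be a proper geodesic metric space. If $X$ is Morse-dichotomous, then $\partial_* X$ is strongly $\sigma$-compact.
   Context: A Morse gauge is a non-decreasing continuous $M:\mathbb{R}_{\ge1}\to\mathbb{R}_{\ge0}$; a quasi-geodesic $\gamma$ is $M$--Morse if every $Q$--quasi-geodesic with endpoints $\gamma(s),\gamma(t)$ lies in the closed $M(Q)$--neighbourhood of $\gamma[s,t]$. A geodesic $\gamma$ is $C$--contracting if for every $x\in X$ the closest-point projection to $\gamma$ of the ball $B_{d(x,\gamma)}(x)$ has diameter at most $C$. $X$ is Morse-dichotomous if the converse of "contracting implies Morse" holds: for every Morse gauge $M$ there is $C$ such that every $M$--Morse geodesic is $C$--contracting. With basepoint $x_0$, $\partial_*X$ is the set of Morse geodesic rays from $x_0$ up to bounded Hausdorff distance, and $\partial^M_{x_0}X$ the subset represented by $M$--Morse rays from $x_0$. $\partial_*X$ is strongly $\sigma$-compact if there is an increasing sequence of Morse gauges $(M_n)$ with $\partial_*X=\bigcup_n\partial^{M_n}_{x_0}X$ such that for every Morse gauge $M$ there is $n$ with $\partial^M_{x_0}X\subset\partial^{M_n}_{x_0}X$. *)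

theory Defs
  imports "HOL-Analysis.Analysis"
begin

text \<open>The metric space X is the whole of a type 'a of class metric_space.\<close>

definition proper_mspace :: "'a::metric_space itself \<Rightarrow> bool" where
  "proper_mspace _ \<longleftrightarrow> (\<forall>(x::'a) r. compact (cball x r))"

definition geodesic_mspace :: "'a::metric_space itself \<Rightarrow> bool" where
  "geodesic_mspace _ \<longleftrightarrow> (\<forall>(x::'a) y. \<exists>\<gamma>::real \<Rightarrow> 'a. \<gamma> 0 = x \<and> \<gamma> (dist x y) = y \<and>
      (\<forall>s\<in>{0..dist x y}. \<forall>t\<in>{0..dist x y}. dist (\<gamma> s) (\<gamma> t) = \<bar>s - t\<bar>))"

definition morse_gauge :: "(real \<Rightarrow> real) \<Rightarrow> bool" where
  "morse_gauge M \<longleftrightarrow> mono_on {1..} M \<and> continuous_on {1..} M \<and> (\<forall>Q\<ge>1. M Q \<ge> 0)"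

definition quasi_geodesic :: "real \<Rightarrow> real set \<Rightarrow> (real \<Rightarrow> 'a::metric_space) \<Rightarrow> bool" where
  "quasi_geodesic Q I \<beta> \<longleftrightarrow> Q \<ge> 1 \<and> I \<noteq> {} \<and> is_interval I \<and> closed I \<and>
     (\<forall>u\<in>I. \<forall>v\<in>I. \<bar>u - v\<bar> / Q - Q \<le> dist (\<beta> u) (\<beta> v) \<and> dist (\<beta> u) (\<beta> v) \<le> Q * \<bar>u - v\<bar> + Q)"

definition geodesic :: "real set \<Rightarrow> (real \<Rightarrow> 'a::metric_space) \<Rightarrow> bool" where
  "geodesic I \<gamma> \<longleftrightarrow> I \<noteq> {} \<and> is_interval I \<and> closed I \<and>
     (\<forall>u\<in>I. \<forall>v\<in>I. dist (\<gamma> u) (\<gamma> v) = \<bar>u - v\<bar>)"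

definition morse :: "(real \<Rightarrow> real) \<Rightarrow> real set \<Rightarrow> (real \<Rightarrow> 'a::metric_space) \<Rightarrow> bool" where
  "morse M I \<gamma> \<longleftrightarrow>
     (\<forall>s\<in>I. \<forall>t\<in>I. s \<le> t \<longrightarrow> (\<forall>Q a b (\<beta>::real \<Rightarrow> 'a). a \<le> b \<and> quasi_geodesic Q {a..b} \<beta> \<and>
        \<beta> a = \<gamma> s \<and> \<beta> b = \<gamma> t \<longrightarrow>
        (\<forall>u\<in>{a..b}. infdist (\<beta> u) (\<gamma> ` {s..t}) \<le> M Q)))"

definition closest_proj :: "real set \<Rightarrow> (real \<Rightarrow> 'a::metric_space) \<Rightarrow> 'a \<Rightarrow> 'a set" where
  "closest_proj I \<gamma> x = {p \<in> \<gamma> ` I. dist x p = infdist x (\<gamma> ` I)}"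

definition contracting :: "real \<Rightarrow> real set \<Rightarrow> (real \<Rightarrow> 'a::metric_space) \<Rightarrow> bool" where
  "contracting C I \<gamma> \<longleftrightarrow>
     (\<forall>x. \<forall>p\<in>(\<Union>y\<in>ball x (infdist x (\<gamma> ` I)). closest_proj I \<gamma> y).
          \<forall>q\<in>(\<Union>y\<in>ball x (infdist x (\<gamma> ` I)). closest_proj I \<gamma> y). dist p q \<le> C)"

definition morse_dichotomous :: "'a::metric_space itself \<Rightarrow> bool" where
  "morse_dichotomous _ \<longleftrightarrow> (\<forall>M. morse_gauge M \<longrightarrow>
     (\<exists>C. \<forall>I (\<gamma>::real \<Rightarrow> 'a). geodesic I \<gamma> \<and> morse M I \<gamma> \<longrightarrow> contracting C I \<gamma>))"

definition geod_ray :: "'a::metric_space \<Rightarrow> (real \<Rightarrow> 'a) \<Rightarrow> bool" where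
  "geod_ray x0 \<gamma> \<longleftrightarrow> geodesic {0..} \<gamma> \<and> \<gamma> 0 = x0"

definition morse_ray :: "'a::metric_space \<Rightarrow> (real \<Rightarrow> 'a) \<Rightarrow> bool" where
  "morse_ray x0 \<gamma> \<longleftrightarrow> geod_ray x0 \<gamma> \<and> (\<exists>M. morse_gauge M \<and> morse M {0..} \<gamma>)"

definition bounded_hausdorff :: "'a::metric_space set \<Rightarrow> 'a set \<Rightarrow> bool" where
  "bounded_hausdorff A B \<longleftrightarrow> (\<exists>K. (\<forall>a\<in>A. infdist a B \<le> K) \<and> (\<forall>b\<in>B. infdist b A \<le> K))"

definition ray_class :: "'a::metric_space \<Rightarrow> (real \<Rightarrow> 'a) \<Rightarrow> (real \<Rightarrow> 'a) set" where
  "ray_class x0 \<gamma> = {\<delta>. morse_ray x0 \<delta> \<and> bounded_hausdorff (\<gamma> ` {0..}) (\<delta> ` {0..})}"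

definition morse_boundary :: "'a::metric_space \<Rightarrow> (real \<Rightarrow> 'a) set set" where
  "morse_boundary x0 = {ray_class x0 \<gamma> | \<gamma>. morse_ray x0 \<gamma>}"

definition morse_boundary_M :: "(real \<Rightarrow> real) \<Rightarrow> 'a::metric_space \<Rightarrow> (real \<Rightarrow> 'a) set set" where
  "morse_boundary_M M x0 = {ray_class x0 \<gamma> | \<gamma>. geod_ray x0 \<gamma> \<and> morse M {0..} \<gamma>}"

definition strongly_sigma_compact :: "'a::metric_space \<Rightarrow> bool" where
  "strongly_sigma_compact x0 \<longleftrightarrow> (\<exists>Ms :: nat \<Rightarrow> real \<Rightarrow> real.
     (\<forall>n. morse_gauge (Ms n)) \<and> (\<forall>n. \<forall>Q\<ge>1. Ms n Q \<le> Ms (Suc n) Q) \<and>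
     morse_boundary x0 = (\<Union>n. morse_boundary_M (Ms n) x0) \<and>
     (\<forall>M. morse_gauge M \<longrightarrow> (\<exists>n. morse_boundary_M M x0 \<subseteq> morse_boundary_M (Ms n) x0)))"

end

theory Submission
  imports Defs
begin

(*
  A C-contracting geodesic \<gamma> is Morse with a gauge depending only on C and monotone
  in C. Morse-dichotomy turns each Morse gauge into a contraction constant, so the
  gauges belonging to the constants n = 0, 1, 2, ... exhaust the Morse boundary in
  the strong sense.

  For the first claim, discretise a Q-quasi-geodesic with endpoints on \<gamma> into points
  x_0, ..., x_n with bounded steps whose index distance is coarsely bounded by their
  distance. Along a stretch of points far from \<gamma>, consecutive projections are at most C
  apart, while the points move apart linearly with a slope exceeding C; so such a stretch
  is short and every x_i is near \<gamma>. The points of \<gamma> near x_0, ..., x_n move from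
  \<gamma>(s) to \<gamma>(t) in bounded jumps, and the same counting argument keeps those leaving
  \<gamma>[s,t] close to an endpoint.
*)

lemma geodesic_dist:
  "geodesic I \<gamma> \<Longrightarrow> u \<in> I \<Longrightarrow> v \<in> I \<Longrightarrow> dist (\<gamma> u) (\<gamma> v) = \<bar>u - v\<bar>"
  by (simp add: geodesic_def)

lemma closest_proj_geodesic_nonempty:
  assumes g: "geodesic I \<gamma>"
  shows "closest_proj I \<gamma> x \<noteq> {}"
proof -
  obtain v0 where v0: "v0 \<in> I" using g unfolding geodesic_def by auto
  define d0 where "d0 = dist x (\<gamma> v0)"
  define K where "K = I \<inter> {v0 - 2 * d0 .. v0 + 2 * d0}"
  have K: "compact K" using g unfolding K_def geodesic_def by (intro closed_Int_compact) auto
  have "K \<noteq> {}" using v0 by (auto simp: K_def d0_def)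
  have "continuous_on K (\<lambda>v. dist x (\<gamma> v))"
  proof -
    have "1-lipschitz_on K \<gamma>"
      by (rule lipschitz_onI) (use g in \<open>auto simp: K_def geodesic_def dist_real_def\<close>)
    then show ?thesis by (intro continuous_on_dist continuous_on_const lipschitz_on_continuous_on)
  qed
  from continuous_attains_inf[OF K \<open>K \<noteq> {}\<close> this]
  obtain v1 where v1: "v1 \<in> K" "\<And>v. v \<in> K \<Longrightarrow> dist x (\<gamma> v1) \<le> dist x (\<gamma> v)"
    by blast
  have v1_le: "dist x (\<gamma> v1) \<le> d0" using v1(2)[of v0] v0 by (auto simp: K_def d0_def)
  have v1_min: "dist x (\<gamma> v1) \<le> dist x (\<gamma> v)" if "v \<in> I" for v
  proof (cases "v \<in> K")
    case False
    then have "2 * d0 < \<bar>v - v0\<bar>" using that by (auto simp: K_def)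
    also have "\<dots> = dist (\<gamma> v) (\<gamma> v0)" using geodesic_dist[OF g that v0] by simp
    also have "\<dots> \<le> dist x (\<gamma> v) + d0" unfolding d0_def by (metis dist_commute dist_triangle)
    finally show ?thesis using v1_le by simp
  qed (use v1 in auto)
  have "v1 \<in> I" using v1(1) by (simp add: K_def)
  have "infdist x (\<gamma> ` I) = dist x (\<gamma> v1)"
  proof (rule antisym)
    show "infdist x (\<gamma> ` I) \<le> dist x (\<gamma> v1)"
      using \<open>v1 \<in> I\<close> by (intro infdist_le) auto
    show "dist x (\<gamma> v1) \<le> infdist x (\<gamma> ` I)"
      using \<open>v1 \<in> I\<close> v1_min by (subst infdist_notempty) (auto intro!: cINF_greatest)
  qed
  with \<open>v1 \<in> I\<close> show ?thesis by (auto simp: closest_proj_def)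
qed

lemma contracting_closest_proj_dist_le:
  assumes "contracting C I \<gamma>" "p \<in> closest_proj I \<gamma> y" "q \<in> closest_proj I \<gamma> z"
    and "dist z y < infdist z (\<gamma> ` I)"
  shows "dist p q \<le> C"
proof -
  have "0 < infdist z (\<gamma> ` I)" using assms(4) zero_le_dist[of z y] by linarith
  then have "y \<in> ball z (infdist z (\<gamma> ` I))" "z \<in> ball z (infdist z (\<gamma> ` I))"
    using assms(4) by auto
  then show ?thesis using assms(1-3) unfolding contracting_def by blast
qed

lemma contracting_mono: "contracting C I \<gamma> \<Longrightarrow> C \<le> C' \<Longrightarrow> contracting C' I \<gamma>"
  unfolding contracting_def by (meson order_trans)

lemma nat_last_index:
  fixes P :: "nat \<Rightarrow> bool"
  assumes "P a" "a \<le> b"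
  obtains k where "a \<le> k" "k \<le> b" "P k" "\<And>j. k < j \<Longrightarrow> j \<le> b \<Longrightarrow> \<not> P j"
proof -
  obtain k where "a \<le> k \<and> k \<le> b \<and> P k" "\<forall>j. a \<le> j \<and> j \<le> b \<and> P j \<longrightarrow> j \<le> k"
    using Nat.ex_has_greatest_nat[of "\<lambda>k. a \<le> k \<and> k \<le> b \<and> P k" a b] assms by blast
  then show thesis by (intro that) (auto, metis le_trans less_imp_le_nat not_le)
qed

lemma nat_first_index:
  fixes P :: "nat \<Rightarrow> bool"
  assumes "P b" "a \<le> b"
  obtains k where "a \<le> k" "k \<le> b" "P k" "\<And>j. a \<le> j \<Longrightarrow> j < k \<Longrightarrow> \<not> P j"
proof -
  obtain k where "a \<le> k \<and> k \<le> b \<and> P k" "\<forall>j<k. \<not> (a \<le> j \<and> j \<le> b \<and> P j)"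
    using ex_least_nat_le[of "\<lambda>k. a \<le> k \<and> k \<le> b \<and> P k" b] assms by blast
  then show thesis by (intro that) force+
qed

lemma nat_excursion:
  fixes P :: "nat \<Rightarrow> bool"
  assumes "P 0" "P n" "\<not> P i" "i \<le> n"
  obtains i1 i2 where "i1 < i" "i < i2" "i2 \<le> n" "P i1" "P i2" "\<And>k. i1 < k \<Longrightarrow> k < i2 \<Longrightarrow> \<not> P k"
proof -
  obtain i1 where i1: "i1 \<le> i" "P i1" "\<And>k. i1 < k \<Longrightarrow> k \<le> i \<Longrightarrow> \<not> P k"
    using nat_last_index[of P 0 i] assms by auto
  obtain i2 where i2: "i \<le> i2" "i2 \<le> n" "P i2" "\<And>k. i \<le> k \<Longrightarrow> k < i2 \<Longrightarrow> \<not> P k"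
    using nat_first_index[of P n i] assms by auto
  have "i1 < i" "i < i2" using assms(3) i1 i2 by (auto simp: le_less)
  moreover have "\<not> P k" if "i1 < k" "k < i2" for k
    using i1(3)[of k] i2(4)[of k] that by (cases "k \<le> i") auto
  ultimately show thesis by (rule that[OF _ _ i2(2) i1(2) i2(3)])
qed

lemma bounded_jumps_crossing:
  fixes v :: "nat \<Rightarrow> real"
  assumes jumps: "\<And>k. i \<le> k \<Longrightarrow> k < j \<Longrightarrow> \<bar>v (Suc k) - v k\<bar> \<le> J"
    and "0 \<le> J" "i \<le> j" "v i \<le> c" "c \<le> v j"
  obtains k where "i \<le> k" "k \<le> j" "\<bar>v k - c\<bar> \<le> J"
proof -
  obtain k where k: "i \<le> k" "k \<le> j" "v k \<le> c" "\<And>l. k < l \<Longrightarrow> l \<le> j \<Longrightarrow> \<not> v l \<le> c"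
    using nat_last_index[of "\<lambda>k. v k \<le> c" i j] assms by blast
  have "c - v k \<le> J"
  proof (cases "k = j")
    case True
    then show ?thesis using k(3) assms by simp
  next
    case False
    then have "c < v (Suc k)" using k(2) k(4)[of "Suc k"] by simp
    with jumps[of k] k(1,2) False show ?thesis by simp
  qed
  with k(1-3) show thesis by (intro that[of k]) simp_all
qed

lemma dist_le_steps:
  fixes x :: "nat \<Rightarrow> 'a::metric_space"
  assumes steps: "\<And>k. i \<le> k \<Longrightarrow> k < j \<Longrightarrow> dist (x k) (x (Suc k)) \<le> S" and "i \<le> j"
  shows "dist (x i) (x j) \<le> real (j - i) * S"
  using \<open>i \<le> j\<close>
proof (induction j rule: dec_induct)
  case (step k)
  have "dist (x i) (x (Suc k)) \<le> dist (x i) (x k) + dist (x k) (x (Suc k))"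
    by (rule dist_triangle)
  with step.IH steps[OF step.hyps] show ?case
    by (simp add: Suc_diff_le step.hyps algebra_simps)
qed simp

definition discrete_quasi_geodesic ::
    "nat \<Rightarrow> real \<Rightarrow> real \<Rightarrow> real \<Rightarrow> (nat \<Rightarrow> 'a::metric_space) \<Rightarrow> bool" where
  "discrete_quasi_geodesic n S \<alpha> \<beta> x \<longleftrightarrow>
     (\<forall>k<n. dist (x k) (x (Suc k)) \<le> S) \<and>
     (\<forall>i j. i \<le> j \<longrightarrow> j \<le> n \<longrightarrow> real (j - i) * \<alpha> - \<beta> \<le> dist (x i) (x j))"

lemma discrete_quasi_geodesicD:
  assumes "discrete_quasi_geodesic n S \<alpha> \<beta> x"
  shows discrete_quasi_geodesic_step: "k < n \<Longrightarrow> dist (x k) (x (Suc k)) \<le> S"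
    and discrete_quasi_geodesic_lower:
      "i \<le> j \<Longrightarrow> j \<le> n \<Longrightarrow> real (j - i) * \<alpha> - \<beta> \<le> dist (x i) (x j)"
  using assms by (auto simp: discrete_quasi_geodesic_def)

lemma discrete_quasi_geodesic_nonneg: "discrete_quasi_geodesic n S \<alpha> \<beta> x \<Longrightarrow> 0 \<le> \<beta>"
  using discrete_quasi_geodesic_lower[of n S \<alpha> \<beta> x 0 0] by simp

lemma discrete_quasi_geodesic_dist_le:
  "discrete_quasi_geodesic n S \<alpha> \<beta> x \<Longrightarrow> i \<le> j \<Longrightarrow> j \<le> n \<Longrightarrow> dist (x i) (x j) \<le> real (j - i) * S"
  by (rule dist_le_steps) (auto intro: discrete_quasi_geodesic_step)

lemma le_of_linear_lower_bound:
  fixes m :: real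
  assumes "1 \<le> \<kappa> * \<alpha>" "0 \<le> \<kappa>" "m * \<alpha> - \<beta> \<le> E" "0 \<le> m"
  shows "m \<le> (E + \<beta>) * \<kappa>"
proof -
  have "m \<le> \<kappa> * (m * \<alpha>)"
    using mult_left_mono[OF assms(1) assms(4)] by (simp add: algebra_simps)
  also have "\<dots> \<le> \<kappa> * (E + \<beta>)" using assms(2,3) by (intro mult_left_mono) auto
  finally show ?thesis by (simp add: mult.commute)
qed

lemma discrete_quasi_geodesic_dist_le_between:
  assumes x: "discrete_quasi_geodesic n S \<alpha> \<beta> x" and "1 \<le> \<kappa> * \<alpha>" "0 \<le> \<kappa>" "0 \<le> S"
    and "i \<le> k" "k \<le> j" "j \<le> n" "dist (x i) (x j) \<le> E"
  shows "dist (x i) (x k) \<le> S * (E + \<beta>) * \<kappa>" and "dist (x k) (x j) \<le> S * (E + \<beta>) * \<kappa>"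
proof -
  have gap: "real (j - i) \<le> (E + \<beta>) * \<kappa>"
    using discrete_quasi_geodesic_lower[OF x, of i j] assms
    by (intro le_of_linear_lower_bound) auto
  have "dist (x i) (x k) \<le> real (k - i) * S"
    using assms by (intro discrete_quasi_geodesic_dist_le[OF x]) auto
  also have "\<dots> \<le> real (j - i) * S" using assms by (intro mult_right_mono) auto
  finally show "dist (x i) (x k) \<le> S * (E + \<beta>) * \<kappa>"
    using mult_right_mono[OF gap \<open>0 \<le> S\<close>] by (simp add: algebra_simps)
  have "dist (x k) (x j) \<le> real (j - k) * S"
    using assms by (intro discrete_quasi_geodesic_dist_le[OF x]) auto
  also have "\<dots> \<le> real (j - i) * S" using assms by (intro mult_right_mono) auto
  finally show "dist (x k) (x j) \<le> S * (E + \<beta>) * \<kappa>"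
    using mult_right_mono[OF gap \<open>0 \<le> S\<close>] by (simp add: algebra_simps)
qed

lemma discrete_quasi_geodesic_excursion_short:
  fixes x :: "nat \<Rightarrow> 'a::metric_space"
  assumes x: "discrete_quasi_geodesic n S \<alpha> \<beta> x"
    and proj: "\<And>y. dist y (P y) = infdist y G"
    and contr: "\<And>y z. dist z y < infdist z G \<Longrightarrow> dist (P y) (P z) \<le> C"
    and "Suc i1 < i2" "i2 \<le> n"
    and near: "infdist (x i1) G \<le> D" "infdist (x i2) G \<le> D"
    and far: "\<And>k. i1 < k \<Longrightarrow> k < i2 \<Longrightarrow> D < infdist (x k) G"
    and "S < D" "1 \<le> \<kappa> * (\<alpha> - C)" "0 \<le> \<kappa>"
  shows "real (i2 - i1) \<le> (2 * D + \<beta>) * \<kappa>"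
proof -
  have "dist (P (x k)) (P (x (Suc k))) \<le> C" if "i1 \<le> k" "k < i2" for k
  proof -
    have "dist (x k) (x (Suc k)) \<le> S"
      using that \<open>i2 \<le> n\<close> by (intro discrete_quasi_geodesic_step[OF x]) auto
    moreover have "D < infdist (x k) G \<or> D < infdist (x (Suc k)) G"
      using far[of k] far[of "Suc k"] that \<open>Suc i1 < i2\<close> by (cases "k = i1") auto
    ultimately show ?thesis
      using contr[of "x k" "x (Suc k)"] contr[of "x (Suc k)" "x k"] \<open>S < D\<close>
      by (auto simp: dist_commute)
  qed
  then have "dist (P (x i1)) (P (x i2)) \<le> real (i2 - i1) * C"
    using \<open>Suc i1 < i2\<close> by (intro dist_le_steps) auto
  moreover have "dist (x i1) (x i2) \<le>
      dist (x i1) (P (x i1)) + dist (P (x i1)) (P (x i2)) + dist (P (x i2)) (x i2)"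
    by (metis add.commute add_left_mono dist_triangle order_trans)
  ultimately have "dist (x i1) (x i2) \<le> 2 * D + real (i2 - i1) * C"
    using proj[of "x i1"] proj[of "x i2"] near by (simp add: dist_commute)
  moreover have "real (i2 - i1) * \<alpha> - \<beta> \<le> dist (x i1) (x i2)"
    using \<open>Suc i1 < i2\<close> \<open>i2 \<le> n\<close> by (intro discrete_quasi_geodesic_lower[OF x]) auto
  ultimately have "real (i2 - i1) * (\<alpha> - C) - \<beta> \<le> 2 * D" by (simp add: algebra_simps)
  then show ?thesis using assms by (intro le_of_linear_lower_bound) auto
qed

lemma discrete_quasi_geodesic_near_contracting:
  fixes x :: "nat \<Rightarrow> 'a::metric_space"
  assumes x: "discrete_quasi_geodesic n S \<alpha> \<beta> x"
    and proj: "\<And>y. dist y (P y) = infdist y G"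
    and contr: "\<And>y z. dist z y < infdist z G \<Longrightarrow> dist (P y) (P z) \<le> C"
    and ends: "infdist (x 0) G \<le> D" "infdist (x n) G \<le> D"
    and "0 \<le> S" "S < D" "1 \<le> \<kappa> * (\<alpha> - C)" "0 \<le> \<kappa>" "i \<le> n"
  shows "infdist (x i) G \<le> S * (2 * D + \<beta>) * \<kappa> + D"
proof (cases "infdist (x i) G \<le> D")
  case True
  have "0 \<le> S * (2 * D + \<beta>) * \<kappa>"
    using discrete_quasi_geodesic_nonneg[OF x] assms by simp
  with True show ?thesis by linarith
next
  case False
  obtain i1 i2 where "i1 < i" "i < i2" "i2 \<le> n"
    and near: "infdist (x i1) G \<le> D" "infdist (x i2) G \<le> D"
    and far: "\<And>k. i1 < k \<Longrightarrow> k < i2 \<Longrightarrow> D < infdist (x k) G"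
    using ends False \<open>i \<le> n\<close>
    by (rule nat_excursion[of "\<lambda>k. infdist (x k) G \<le> D" n i]) (auto simp: not_le)
  have gap: "real (i2 - i1) \<le> (2 * D + \<beta>) * \<kappa>"
    using \<open>i1 < i\<close> \<open>i < i2\<close> assms
    by (intro discrete_quasi_geodesic_excursion_short[OF x proj contr _ \<open>i2 \<le> n\<close> near far]) auto
  have "dist (x i1) (x i) \<le> real (i - i1) * S"
    using \<open>i1 < i\<close> \<open>i \<le> n\<close> by (intro discrete_quasi_geodesic_dist_le[OF x]) auto
  also have "\<dots> \<le> real (i2 - i1) * S" using \<open>i < i2\<close> \<open>0 \<le> S\<close> by (intro mult_right_mono) auto
  also have "\<dots> \<le> S * (2 * D + \<beta>) * \<kappa>"
    using mult_right_mono[OF gap \<open>0 \<le> S\<close>] by (simp add: algebra_simps)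
  finally show ?thesis
    using infdist_triangle[of "x i" G "x i1"] near(1) by (simp add: dist_commute)
qed

lemma geodesic_shadow_of_path:
  fixes x :: "nat \<Rightarrow> 'a::metric_space" and \<gamma> :: "real \<Rightarrow> 'a"
  assumes step: "\<And>k. k < n \<Longrightarrow> dist (x k) (x (Suc k)) \<le> S" and g: "geodesic I \<gamma>"
    and near: "\<And>k. k \<le> n \<Longrightarrow> \<exists>v\<in>I. dist (x k) (\<gamma> v) \<le> B"
    and st: "s \<in> I" "t \<in> I" and ends: "x 0 = \<gamma> s" "x n = \<gamma> t"
  obtains v where "v 0 = s" "v n = t" "\<And>k. k \<le> n \<Longrightarrow> v k \<in> I \<and> dist (x k) (\<gamma> (v k)) \<le> B"
    "\<And>k. k < n \<Longrightarrow> \<bar>v (Suc k) - v k\<bar> \<le> 2 * B + S"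
proof -
  have "0 \<le> B" using near[of 0] by (auto intro: order_trans[OF zero_le_dist])
  have "s = t" if "n = 0"
    using ends geodesic_dist[OF g st] that by simp
  define v where "v k =
    (if k = 0 then s else if k = n then t else SOME w. w \<in> I \<and> dist (x k) (\<gamma> w) \<le> B)" for k
  have v0: "v 0 = s" and vn: "v n = t" using \<open>n = 0 \<Longrightarrow> s = t\<close> by (auto simp: v_def)
  have v: "v k \<in> I \<and> dist (x k) (\<gamma> (v k)) \<le> B" if "k \<le> n" for k
  proof (cases "k = 0 \<or> k = n")
    case True
    then show ?thesis using v0 vn st ends \<open>0 \<le> B\<close> by auto
  next
    case False
    then have "v k = (SOME w. w \<in> I \<and> dist (x k) (\<gamma> w) \<le> B)" by (simp add: v_def)
    with near[OF that] show ?thesis by (metis (mono_tags, lifting) someI_ex)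
  qed
  have jump: "\<bar>v (Suc k) - v k\<bar> \<le> 2 * B + S" if "k < n" for k
  proof -
    have "\<bar>v (Suc k) - v k\<bar> = dist (\<gamma> (v (Suc k))) (\<gamma> (v k))"
      using v[of k] v[of "Suc k"] that geodesic_dist[OF g] by simp
    also have "\<dots> \<le>
        dist (\<gamma> (v (Suc k))) (x (Suc k)) + dist (x (Suc k)) (x k) + dist (x k) (\<gamma> (v k))"
      by (metis add_right_mono dist_triangle order_trans)
    also have "\<dots> \<le> 2 * B + S"
      using v[of k] v[of "Suc k"] step[OF that] that by (simp add: dist_commute)
    finally show ?thesis .
  qed
  from v0 vn v jump show thesis by (rule that)
qed

lemma discrete_quasi_geodesic_near_segment:
  fixes x :: "nat \<Rightarrow> 'a::metric_space" and \<gamma> :: "real \<Rightarrow> 'a"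
  assumes x: "discrete_quasi_geodesic n S \<alpha> \<beta> x" and g: "geodesic I \<gamma>"
    and near: "\<And>k. k \<le> n \<Longrightarrow> \<exists>v\<in>I. dist (x k) (\<gamma> v) \<le> B"
    and st: "s \<in> I" "t \<in> I" "s \<le> t" and ends: "x 0 = \<gamma> s" "x n = \<gamma> t"
    and "1 \<le> \<kappa> * \<alpha>" "0 \<le> \<kappa>" "0 \<le> S" "i \<le> n"
  shows "\<exists>w\<in>{s..t}. dist (x i) (\<gamma> w) \<le> B + S * (3 * B + S + \<beta>) * \<kappa>"
proof -
  obtain v where v0: "v 0 = s" and vn: "v n = t"
    and v: "\<And>k. k \<le> n \<Longrightarrow> v k \<in> I \<and> dist (x k) (\<gamma> (v k)) \<le> B"
    and jump: "\<And>k. k < n \<Longrightarrow> \<bar>v (Suc k) - v k\<bar> \<le> 2 * B + S"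
    using geodesic_shadow_of_path[OF discrete_quasi_geodesic_step[OF x] g near st(1,2) ends]
    by blast
  have "0 \<le> B" using v[of 0] by (auto intro: order_trans[OF zero_le_dist])
  have margin: "0 \<le> S * (3 * B + S + \<beta>) * \<kappa>"
    using discrete_quasi_geodesic_nonneg[OF x] assms \<open>0 \<le> B\<close> by simp
  consider "v i \<in> {s..t}" | "t < v i" | "v i < s" by force
  then show ?thesis
  proof cases
    case 1
    then show ?thesis using v[OF \<open>i \<le> n\<close>] margin by force
  next
    case 2
    obtain j where "j \<le> i" "\<bar>v j - t\<bar> \<le> 2 * B + S"
      using bounded_jumps_crossing[of 0 i v "2 * B + S" t] jump \<open>i \<le> n\<close> \<open>0 \<le> B\<close> \<open>0 \<le> S\<close> v0 st 2
      by auto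
    then have "dist (x j) (x n) \<le> 3 * B + S"
      using dist_triangle[of "x j" "\<gamma> t" "\<gamma> (v j)"] v[of j] geodesic_dist[OF g, of "v j" t]
        \<open>i \<le> n\<close> st ends by simp
    then have "dist (x i) (\<gamma> t) \<le> S * (3 * B + S + \<beta>) * \<kappa>"
      using discrete_quasi_geodesic_dist_le_between(2)[OF x, of \<kappa> j i n] assms \<open>j \<le> i\<close> by simp
    then show ?thesis using st \<open>0 \<le> B\<close> by (intro bexI[of _ t]) auto
  next
    case 3
    obtain j where "i \<le> j" "j \<le> n" "\<bar>v j - s\<bar> \<le> 2 * B + S"
      using bounded_jumps_crossing[of i n v "2 * B + S" s] jump \<open>i \<le> n\<close> \<open>0 \<le> B\<close> \<open>0 \<le> S\<close> vn st 3
      by auto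
    then have "dist (x 0) (x j) \<le> 3 * B + S"
      using dist_triangle[of "\<gamma> s" "x j" "\<gamma> (v j)"] v[of j] geodesic_dist[OF g, of s "v j"]
        st ends by (simp add: dist_commute abs_minus_commute)
    then have "dist (x i) (\<gamma> s) \<le> S * (3 * B + S + \<beta>) * \<kappa>"
      using discrete_quasi_geodesic_dist_le_between(1)[OF x, of \<kappa> 0 i j] assms \<open>i \<le> j\<close> \<open>j \<le> n\<close>
      by (simp add: dist_commute)
    then show ?thesis using st \<open>0 \<le> B\<close> by (intro bexI[of _ s]) auto
  qed
qed

lemma interval_grid:
  fixes a b h :: real
  assumes "a \<le> b" "0 < h"
  obtains p :: "nat \<Rightarrow> real" and n :: nat
  where "p 0 = a" "p n = b" "\<And>k. p k \<in> {a..b}" "\<And>k. \<bar>p k - p (Suc k)\<bar> \<le> h"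
    and "\<And>i j. i \<le> j \<Longrightarrow> j \<le> n \<Longrightarrow> (real (j - i) - 1) * h \<le> \<bar>p i - p j\<bar>"
    and "\<And>u. u \<in> {a..b} \<Longrightarrow> \<exists>i\<le>n. \<bar>u - p i\<bar> \<le> h"
proof -
  define n where "n = nat \<lceil>(b - a) / h\<rceil>"
  define p where "p k = min (a + real k * h) b" for k
  have "real n = of_int \<lceil>(b - a) / h\<rceil>"
    using assms unfolding n_def by simp
  then have "(b - a) / h \<le> real n" "real n < (b - a) / h + 1"
    using ceiling_correct[of "(b - a) / h"] by linarith+
  then have n: "b - a \<le> real n * h" "(real n - 1) * h < b - a"
    using \<open>0 < h\<close> by (simp_all add: field_simps)
  have gap: "(real (j - i) - 1) * h \<le> \<bar>p i - p j\<bar>" if "i \<le> j" "j \<le> n" for i j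
  proof -
    have "(real j - 1) * h \<le> (real n - 1) * h"
      using that \<open>0 < h\<close> by (intro mult_right_mono) auto
    then have "a + (real j - 1) * h \<le> b" using n(2) by linarith
    then have "a + (real j - 1) * h \<le> p j"
      using \<open>0 < h\<close> by (simp add: p_def algebra_simps)
    moreover have "p i \<le> a + real i * h" by (simp add: p_def)
    ultimately show ?thesis using \<open>i \<le> j\<close> by (auto simp: algebra_simps)
  qed
  have cover: "\<exists>i\<le>n. \<bar>u - p i\<bar> \<le> h" if u: "u \<in> {a..b}" for u
  proof -
    define i where "i = nat \<lfloor>(u - a) / h\<rfloor>"
    have "real i = of_int \<lfloor>(u - a) / h\<rfloor>"
      using u \<open>0 < h\<close> unfolding i_def by simp
    then have "real i \<le> (u - a) / h" "(u - a) / h < real i + 1"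
      using floor_correct[of "(u - a) / h"] by linarith+
    then have "real i * h \<le> u - a" "u - a < real i * h + h"
      using \<open>0 < h\<close> by (simp_all add: field_simps)
    then have "\<bar>u - p i\<bar> \<le> h" using u by (auto simp: p_def)
    moreover have "real i * h \<le> real n * h"
      using \<open>real i * h \<le> u - a\<close> u n(1) by auto
    then have "i \<le> n" using \<open>0 < h\<close> by (simp add: mult_le_cancel_right)
    ultimately show ?thesis by blast
  qed
  have "p 0 = a" "p n = b" "p k \<in> {a..b}" "\<bar>p k - p (Suc k)\<bar> \<le> h" for k
    using n assms by (auto simp: p_def algebra_simps)
  from this gap cover show thesis by (rule that)
qed

lemma quasi_geodesic_discretisation:
  fixes \<beta> :: "real \<Rightarrow> 'a::metric_space"
  assumes qg: "quasi_geodesic Q {a..b} \<beta>" and "a \<le> b" "0 < h"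
  obtains n x where "discrete_quasi_geodesic n (Q * h + Q) (h / Q) (h + Q) x"
    and "x 0 = \<beta> a" "x n = \<beta> b"
    and "\<And>u. u \<in> {a..b} \<Longrightarrow> \<exists>i\<le>n. dist (\<beta> u) (x i) \<le> Q * h + Q"
proof -
  obtain p n where p0: "p 0 = a" and pn: "p n = b" and p: "\<And>k. p k \<in> {a..b}"
    and step: "\<And>k. \<bar>p k - p (Suc k)\<bar> \<le> h"
    and gap: "\<And>i j. i \<le> j \<Longrightarrow> j \<le> n \<Longrightarrow> (real (j - i) - 1) * h \<le> \<bar>p i - p j\<bar>"
    and cover: "\<And>u. u \<in> {a..b} \<Longrightarrow> \<exists>i\<le>n. \<bar>u - p i\<bar> \<le> h"
    by (rule interval_grid[OF \<open>a \<le> b\<close> \<open>0 < h\<close>]) (rule that)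
  have "1 \<le> Q" using qg by (simp add: quasi_geodesic_def)
  have qb: "\<bar>u - v\<bar> / Q - Q \<le> dist (\<beta> u) (\<beta> v)" "dist (\<beta> u) (\<beta> v) \<le> Q * \<bar>u - v\<bar> + Q"
    if "u \<in> {a..b}" "v \<in> {a..b}" for u v
    using qg that by (auto simp: quasi_geodesic_def)
  have close: "dist (\<beta> u) (\<beta> (p k)) \<le> Q * h + Q" if "u \<in> {a..b}" "\<bar>u - p k\<bar> \<le> h" for u k
    using qb(2)[OF that(1) p, of k] mult_left_mono[OF that(2), of Q] \<open>1 \<le> Q\<close> by linarith
  have "real (j - i) * (h / Q) - (h + Q) \<le> dist (\<beta> (p i)) (\<beta> (p j))" if "i \<le> j" "j \<le> n" for i j
  proof -
    have "(real (j - i) - 1) * h / Q \<le> \<bar>p i - p j\<bar> / Q"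
      using gap[OF that] \<open>1 \<le> Q\<close> by (intro divide_right_mono) auto
    moreover have "(real (j - i) - 1) * h / Q = real (j - i) * (h / Q) - h / Q"
      by (simp add: left_diff_distrib diff_divide_distrib)
    moreover have "h / Q \<le> h" using \<open>1 \<le> Q\<close> \<open>0 < h\<close> by (simp add: field_simps)
    ultimately show ?thesis using qb(1)[OF p p, of i j] by simp
  qed
  then have "discrete_quasi_geodesic n (Q * h + Q) (h / Q) (h + Q) (\<beta> \<circ> p)"
    using close[OF p step] by (simp add: discrete_quasi_geodesic_def)
  moreover have "\<exists>i\<le>n. dist (\<beta> u) ((\<beta> \<circ> p) i) \<le> Q * h + Q" if "u \<in> {a..b}" for u
    using cover[OF that] close[OF that] by auto
  ultimately show thesis using p0 pn by (intro that[of n "\<beta> \<circ> p"]) auto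
qed

lemma discrete_quasi_geodesic_near_contracting_geodesic:
  fixes x :: "nat \<Rightarrow> 'a::metric_space"
  assumes x: "discrete_quasi_geodesic n S \<alpha> \<beta> x"
    and g: "geodesic I \<gamma>" and c: "contracting C I \<gamma>"
    and "s \<in> I" "t \<in> I" "x 0 = \<gamma> s" "x n = \<gamma> t"
    and "0 \<le> S" "1 \<le> \<kappa> * (\<alpha> - C)" "0 \<le> \<kappa>" "i \<le> n"
  shows "\<exists>v\<in>I. dist (x i) (\<gamma> v) \<le> S * (2 * (S + 1) + \<beta>) * \<kappa> + (S + 1)"
proof -
  define P where "P y = (SOME p. p \<in> closest_proj I \<gamma> y)" for y
  have P: "P y \<in> closest_proj I \<gamma> y" for y
    using closest_proj_geodesic_nonempty[OF g] unfolding P_def by (simp add: some_in_eq)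
  have dist_le: "infdist (x i) (\<gamma> ` I) \<le> S * (2 * (S + 1) + \<beta>) * \<kappa> + (S + 1)"
    by (rule discrete_quasi_geodesic_near_contracting[OF x, where P = P and C = C])
      (use P contracting_closest_proj_dist_le[OF c P P] assms in \<open>auto simp: closest_proj_def\<close>)
  from P[of "x i"] obtain v where "v \<in> I" "dist (x i) (\<gamma> v) = infdist (x i) (\<gamma> ` I)"
    by (auto simp: closest_proj_def)
  with dist_le show ?thesis by (intro bexI[of _ v]) auto
qed

text \<open>The mesh \<open>h\<close> of the discretisation is chosen so that \<open>Q * (h / Q - C) \<ge> 1\<close>;
  \<open>S\<close> and \<open>h + Q\<close> are the constants of the discretised quasi-geodesic, and \<open>B\<close> is the
  bound of \<open>discrete_quasi_geodesic_near_contracting\<close> for \<open>D = S + 1\<close>.\<close>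

definition contraction_gauge :: "real \<Rightarrow> real \<Rightarrow> real" where
  "contraction_gauge C Q =
     (let h = 2 * C * Q + 1; S = Q * h + Q; D = S + 1; \<beta> = h + Q;
          B = S * (2 * D + \<beta>) * Q + D
      in S + B + S * (3 * B + S + \<beta>) * Q)"

lemma contraction_gauge_mono:
  assumes "0 \<le> C" "C \<le> C'" "1 \<le> Q" "Q \<le> Q'"
  shows "contraction_gauge C Q \<le> contraction_gauge C' Q'"
proof -
  have "0 \<le> C'" "0 \<le> Q" using assms by auto
  with assms show ?thesis
    unfolding contraction_gauge_def Let_def
    by (intro add_mono mult_mono order_refl add_nonneg_nonneg mult_nonneg_nonneg zero_le_numeral)
      auto
qed

lemma morse_gauge_contraction_gauge:
  assumes "0 \<le> C"
  shows "morse_gauge (contraction_gauge C)"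
  unfolding morse_gauge_def
proof (intro conjI allI impI)
  show "mono_on {1..} (contraction_gauge C)"
    by (rule mono_onI) (use contraction_gauge_mono assms in auto)
  show "continuous_on {1..} (contraction_gauge C)"
    unfolding contraction_gauge_def Let_def by (intro continuous_intros)
  show "0 \<le> contraction_gauge C Q" if "1 \<le> Q" for Q
    using that assms unfolding contraction_gauge_def Let_def
    by (auto intro!: add_nonneg_nonneg mult_nonneg_nonneg)
qed

theorem contracting_imp_morse:
  fixes \<gamma> :: "real \<Rightarrow> 'a::metric_space"
  assumes g: "geodesic I \<gamma>" and c: "contracting C I \<gamma>" and "0 \<le> C"
  shows "morse (contraction_gauge C) I \<gamma>"
  unfolding morse_def
proof (intro ballI impI allI)
  fix s t Q a b u and \<beta> :: "real \<Rightarrow> 'a"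
  assume st: "s \<in> I" "t \<in> I" "s \<le> t" and u: "u \<in> {a..b}"
    and \<beta>: "a \<le> b \<and> quasi_geodesic Q {a..b} \<beta> \<and> \<beta> a = \<gamma> s \<and> \<beta> b = \<gamma> t"
  then have "1 \<le> Q" by (simp add: quasi_geodesic_def)
  define h where "h = 2 * C * Q + 1"
  define S where "S = Q * h + Q"
  define D where "D = S + 1"
  define B where "B = S * (2 * D + (h + Q)) * Q + D"
  have "1 \<le> h" "0 \<le> S" "0 \<le> Q" using \<open>0 \<le> C\<close> \<open>1 \<le> Q\<close> by (simp_all add: h_def S_def)
  have "Q * (h / Q) = h" using \<open>1 \<le> Q\<close> by simp
  then have "1 \<le> Q * (h / Q - C)" "1 \<le> Q * (h / Q)"
    using \<open>0 \<le> C\<close> \<open>1 \<le> Q\<close> \<open>1 \<le> h\<close> by (simp_all add: h_def right_diff_distrib)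
  obtain n x where x: "discrete_quasi_geodesic n S (h / Q) (h + Q) x"
    and ends: "x 0 = \<gamma> s" "x n = \<gamma> t"
    and cover: "\<And>u. u \<in> {a..b} \<Longrightarrow> \<exists>i\<le>n. dist (\<beta> u) (x i) \<le> S"
    using quasi_geodesic_discretisation[of Q a b \<beta> h] \<beta> \<open>1 \<le> h\<close> unfolding S_def by auto
  have near: "\<exists>v\<in>I. dist (x i) (\<gamma> v) \<le> B" if "i \<le> n" for i
    unfolding B_def D_def
    by (rule discrete_quasi_geodesic_near_contracting_geodesic[OF x g c])
      (use st ends \<open>0 \<le> S\<close> \<open>1 \<le> Q * (h / Q - C)\<close> \<open>0 \<le> Q\<close> that in auto)
  obtain i where "i \<le> n" "dist (\<beta> u) (x i) \<le> S" using cover[OF u] by blast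
  moreover obtain w where "w \<in> {s..t}" "dist (x i) (\<gamma> w) \<le> B + S * (3 * B + S + (h + Q)) * Q"
    using discrete_quasi_geodesic_near_segment[OF x g near st ends \<open>1 \<le> Q * (h / Q)\<close>
        \<open>0 \<le> Q\<close> \<open>0 \<le> S\<close> \<open>i \<le> n\<close>] by blast
  ultimately have "dist (\<beta> u) (\<gamma> w) \<le> contraction_gauge C Q"
    using dist_triangle[of "\<beta> u" "\<gamma> w" "x i"]
    unfolding contraction_gauge_def Let_def h_def S_def D_def B_def by simp
  with \<open>w \<in> {s..t}\<close> show "infdist (\<beta> u) (\<gamma> ` {s..t}) \<le> contraction_gauge C Q"
    by (intro infdist_le2) auto
qed

lemma strongly_sigma_compactI:
  fixes x0 :: "'a::metric_space"
  assumes gauges: "\<And>n. morse_gauge (Ms n)" and "\<And>n Q. 1 \<le> Q \<Longrightarrow> Ms n Q \<le> Ms (Suc n) Q"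
    and exhaust: "\<And>M. morse_gauge M \<Longrightarrow>
      \<exists>n. \<forall>\<gamma>. geod_ray x0 \<gamma> \<longrightarrow> morse M {0..} \<gamma> \<longrightarrow> morse (Ms n) {0..} \<gamma>"
  shows "strongly_sigma_compact x0"
proof -
  have sub: "\<exists>n. morse_boundary_M M x0 \<subseteq> morse_boundary_M (Ms n) x0" if "morse_gauge M" for M
    using exhaust[OF that] unfolding morse_boundary_M_def by blast
  have "morse_boundary x0 = (\<Union>M\<in>Collect morse_gauge. morse_boundary_M M x0)"
    unfolding morse_boundary_def morse_boundary_M_def morse_ray_def by blast
  also have "\<dots> = (\<Union>n. morse_boundary_M (Ms n) x0)"
    using sub gauges by blast
  finally show ?thesis
    unfolding strongly_sigma_compact_def using assms sub by blast
qed

theorem corollary2p15: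
  fixes x0 :: "'a::metric_space"
  assumes "proper_mspace TYPE('a)" and "geodesic_mspace TYPE('a)"
    and "morse_dichotomous TYPE('a)"
  shows "strongly_sigma_compact x0"
proof (rule strongly_sigma_compactI[where Ms = "\<lambda>n. contraction_gauge (real n)"])
  show "morse_gauge (contraction_gauge (real n))" for n
    by (simp add: morse_gauge_contraction_gauge)
  show "contraction_gauge (real n) Q \<le> contraction_gauge (real (Suc n)) Q" if "1 \<le> Q" for n Q
    using that by (intro contraction_gauge_mono) auto
  fix M assume "morse_gauge M"
  then obtain C where C: "\<And>I (\<gamma>::real \<Rightarrow> 'a). geodesic I \<gamma> \<Longrightarrow> morse M I \<gamma> \<Longrightarrow> contracting C I \<gamma>"
    using assms(3) unfolding morse_dichotomous_def by blast
  have "morse (contraction_gauge (real (nat \<lceil>C\<rceil>))) {0..} \<gamma>"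
    if "geod_ray x0 \<gamma>" "morse M {0..} \<gamma>" for \<gamma>
  proof (rule contracting_imp_morse)
    show "geodesic {0..} \<gamma>" using that(1) by (simp add: geod_ray_def)
    then show "contracting (real (nat \<lceil>C\<rceil>)) {0..} \<gamma>"
      using C that(2) contracting_mono by (metis of_nat_ceiling)
  qed simp
  then show "\<exists>n. \<forall>\<gamma>. geod_ray x0 \<gamma> \<longrightarrow> morse M {0..} \<gamma> \<longrightarrow> morse (contraction_gauge (real n)) {0..} \<gamma>"
    by blast
qed

end
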